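(* Let $G$ be a group, $\partial$ an endomorphism of $G$, and $a,\sigma$ fixed elements of $G$. Write $\sigma_i=\partial^{i-1}(\sigma)$ and $a_i=\partial^{i-1}(a)$ for $i\ge1$, and let $H$ be the subgroup of $G$ generated by all $\sigma_i$ and $a_i$. Define $x*y=x\cdot\partial y\cdot\sigma\cdot\partial x^{-1}$ and $x\circ y=x\cdot\partial y\cdot a$. Then $(H,*,\circ)$ is an ALD-system if and only if the elements $\sigma_i,a_i$ satisfy the relations: $\sigma_j\sigma_i=\sigma_i\sigma_j$ and $a_j\sigma_i=\sigma_ia_j$ for $j\ge i+2$; $a_j\sigma_i=\sigma_{i+1}a_j$ and $a_ja_i=a_{i+1}a_j$ for $j\le i-1$; $\sigma_j\sigma_i\sigma_j=\sigma_i\sigma_j\sigma_i$, $\sigma_i\sigma_ja_i=a_j\sigma_i$ and $\sigma_j\sigma_ia_j=a_i\sigma_i$ for $j=i+1$ (i.e., if and only if $H$ is a homomorphic image of $B_\bullet$ via $\sigma_i\mapsto\sigma_i$, $a_i\mapsto a_i$).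
   Context: An ALD-system is a set with two binary operations $*,\circ$ satisfying $x*(y*z)=(x*y)*(x*z)$, $x*(y*z)=(x\circ y)*z$ and $x*(y\circ z)=(x*y)\circ(x*z)$. $B_\bullet$ denotes the group presented by generators $\sigma_1,\sigma_2,\dots,a_1,a_2,\dots$ and the relations listed in the claim. *)

theory Defs
  imports "HOL-Algebra.Generated_Groups"
begin

definition ald_system :: "'a set \<Rightarrow> ('a \<Rightarrow> 'a \<Rightarrow> 'a) \<Rightarrow> ('a \<Rightarrow> 'a \<Rightarrow> 'a) \<Rightarrow> bool" where
  "ald_system S st ci \<longleftrightarrow>
     (\<forall>x\<in>S. \<forall>y\<in>S. st x y \<in> S \<and> ci x y \<in> S) \<and>
     (\<forall>x\<in>S. \<forall>y\<in>S. \<forall>z\<in>S.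
        st x (st y z) = st (st x y) (st x z) \<and>
        st x (st y z) = st (ci x y) z \<and>
        st x (ci y z) = ci (st x y) (st x z))"

definition ald_star :: "('a, 'b) monoid_scheme \<Rightarrow> ('a \<Rightarrow> 'a) \<Rightarrow> 'a \<Rightarrow> 'a \<Rightarrow> 'a \<Rightarrow> 'a" where
  "ald_star G d s x y = x \<otimes>\<^bsub>G\<^esub> d y \<otimes>\<^bsub>G\<^esub> s \<otimes>\<^bsub>G\<^esub> inv\<^bsub>G\<^esub> (d x)"

definition ald_circ :: "('a, 'b) monoid_scheme \<Rightarrow> ('a \<Rightarrow> 'a) \<Rightarrow> 'a \<Rightarrow> 'a \<Rightarrow> 'a \<Rightarrow> 'a" where
  "ald_circ G d a x y = x \<otimes>\<^bsub>G\<^esub> d y \<otimes>\<^bsub>G\<^esub> a"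

definition B_relations :: "('a, 'b) monoid_scheme \<Rightarrow> (nat \<Rightarrow> 'a) \<Rightarrow> (nat \<Rightarrow> 'a) \<Rightarrow> bool" where
  "B_relations G sig al \<longleftrightarrow>
    (\<forall>i\<ge>1. \<forall>j\<ge>1.
      (j \<ge> i + 2 \<longrightarrow>
         sig j \<otimes>\<^bsub>G\<^esub> sig i = sig i \<otimes>\<^bsub>G\<^esub> sig j \<and>
         al j \<otimes>\<^bsub>G\<^esub> sig i = sig i \<otimes>\<^bsub>G\<^esub> al j) \<and>
      (j + 1 \<le> i \<longrightarrow>
         al j \<otimes>\<^bsub>G\<^esub> sig i = sig (i + 1) \<otimes>\<^bsub>G\<^esub> al j \<and>
         al j \<otimes>\<^bsub>G\<^esub> al i = al (i + 1) \<otimes>\<^bsub>G\<^esub> al j) \<and>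
      (j = i + 1 \<longrightarrow>
         sig j \<otimes>\<^bsub>G\<^esub> sig i \<otimes>\<^bsub>G\<^esub> sig j = sig i \<otimes>\<^bsub>G\<^esub> sig j \<otimes>\<^bsub>G\<^esub> sig i \<and>
         sig i \<otimes>\<^bsub>G\<^esub> sig j \<otimes>\<^bsub>G\<^esub> al i = al j \<otimes>\<^bsub>G\<^esub> sig i \<and>
         sig j \<otimes>\<^bsub>G\<^esub> sig i \<otimes>\<^bsub>G\<^esub> al j = al i \<otimes>\<^bsub>G\<^esub> sig i))"

end

theory Submission
  imports Defs
begin

(*
  Expanding the three ALD identities and cancelling, they hold on a subgroup H containing s and a
  and stable under d exactly when s d(d h) = d(d h) s and a d(h) = d(d h) a for all h in H, and
  d(s) s d(s) = s d(s) s, s d(s) a = d(a) s, d(s) s d(a) = a s; the converse comes from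
  specialising the identities at 1 in all but at most one variable.  Each twisted commutation
  u f(h) = g(h) u with f, g homomorphisms cuts out a subgroup, so on H it suffices to check it on
  the generators d^k s, d^k a.  Applying d^(i-1) to the resulting relations gives those of B.
*)

lemma image_diff_one_atLeast_one: "(\<lambda>i::nat. f (i - 1)) ` {1..} = range f"
proof -
  have "{1..} = range Suc"
    by (auto simp: image_iff dest: Suc_le_D)
  then show ?thesis
    by (simp add: image_image)
qed

lemma hom_funpow: "f \<in> hom G G \<Longrightarrow> f ^^ n \<in> hom G G"
  by (induction n) (auto simp: hom_compose, simp add: hom_def)

lemma funpow_funpow_apply: "(f ^^ m) ((f ^^ n) x) = (f ^^ (m + n)) x"
  by (simp add: funpow_add)

lemma (in group) twisted_commute_generate:
  assumes f: "group_hom H G f" and g: "group_hom H G g"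
    and u: "u \<in> carrier G" and S: "S \<subseteq> carrier H"
    and gens: "\<And>x. x \<in> S \<Longrightarrow> u \<otimes> f x = g x \<otimes> u"
    and h: "h \<in> generate H S"
  shows "u \<otimes> f h = g h \<otimes> u"
  using h
proof (induction rule: generate.induct)
  case one
  then show ?case
    using f g u by (simp add: group_hom.hom_one)
next
  case (incl x)
  then show ?case by (rule gens)
next
  case (inv x)
  have x: "x \<in> carrier H" using inv S by blast
  then have fx: "f x \<in> carrier G" and gx: "g x \<in> carrier G"
    using f g by (simp_all add: group_hom.hom_closed)
  have "u \<otimes> inv (f x) = inv (g x) \<otimes> (g x \<otimes> u) \<otimes> inv (f x)"
    using gx u by (simp flip: m_assoc)
  also have "\<dots> = inv (g x) \<otimes> (u \<otimes> f x) \<otimes> inv (f x)"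
    using gens[OF inv] by simp
  also have "\<dots> = inv (g x) \<otimes> u"
    using fx gx u by (simp add: m_assoc)
  finally show ?case
    using x f g by (simp add: group_hom.hom_inv)
next
  case (eng x y)
  have "x \<in> carrier H" "y \<in> carrier H"
    using eng.hyps group.generate_in_carrier[OF group_hom.axioms(1)[OF f] S] by auto
  then have c: "f x \<in> carrier G" "f y \<in> carrier G" "g x \<in> carrier G" "g y \<in> carrier G"
    and "f (x \<otimes>\<^bsub>H\<^esub> y) = f x \<otimes> f y" "g (x \<otimes>\<^bsub>H\<^esub> y) = g x \<otimes> g y"
    using f g by (simp_all add: group_hom.hom_closed group_hom.hom_mult)
  then show ?case
    using eng.IH u by (metis m_assoc)
qed

lemma (in group) hom_image_generate_subset:
  assumes f: "f \<in> hom G G" and S: "S \<subseteq> carrier G" and fS: "f ` S \<subseteq> S"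
  shows "f ` generate G S \<subseteq> generate G S"
proof -
  have "group_hom G G f"
    using f by (simp add: group_hom_def group_hom_axioms_def)
  then have "f ` generate G S = generate G (f ` S)"
    using S by (simp add: group_hom.generate_img)
  also have "\<dots> \<subseteq> generate G S"
    using fS by (rule mono_generate)
  finally show ?thesis .
qed

locale ald_endomorphism = group G for G (structure) +
  fixes d :: "'a \<Rightarrow> 'a" and a s :: 'a
  assumes d_hom: "d \<in> hom G G"
    and a_closed [simp]: "a \<in> carrier G" and s_closed [simp]: "s \<in> carrier G"
begin

lemma d_group_hom: "group_hom G G d"
  using d_hom by (simp add: group_hom_def group_hom_axioms_def)

lemma d_closed [simp]: "x \<in> carrier G \<Longrightarrow> d x \<in> carrier G"
  using d_hom by (rule hom_in_carrier)

lemma d_mult [simp]: "x \<in> carrier G \<Longrightarrow> y \<in> carrier G \<Longrightarrow> d (x \<otimes> y) = d x \<otimes> d y"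
  using d_hom by (rule hom_mult)

lemma d_one [simp]: "d \<one> = \<one>"
  using d_group_hom by (rule group_hom.hom_one)

lemma d_inv [simp]: "x \<in> carrier G \<Longrightarrow> d (inv x) = inv (d x)"
  using d_group_hom by (rule group_hom.hom_inv)

lemma dd_group_hom: "group_hom G G (d \<circ> d)"
  using Group.hom_compose[OF d_hom d_hom] by (simp add: group_hom_def group_hom_axioms_def)

lemma dpow_closed [simp]: "x \<in> carrier G \<Longrightarrow> (d ^^ n) x \<in> carrier G"
  using hom_funpow[OF d_hom] by (rule hom_in_carrier)

lemma dpow_mult [simp]:
  "x \<in> carrier G \<Longrightarrow> y \<in> carrier G \<Longrightarrow> (d ^^ n) (x \<otimes> y) = (d ^^ n) x \<otimes> (d ^^ n) y"
  using hom_funpow[OF d_hom] by (rule hom_mult)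

lemma inv_mult_cancel_left [simp]: "x \<in> carrier G \<Longrightarrow> y \<in> carrier G \<Longrightarrow> inv x \<otimes> (x \<otimes> y) = y"
  by (simp flip: m_assoc)

lemma mult_inv_cancel_left [simp]: "x \<in> carrier G \<Longrightarrow> y \<in> carrier G \<Longrightarrow> x \<otimes> (inv x \<otimes> y) = y"
  by (simp flip: m_assoc)

abbreviation star :: "'a \<Rightarrow> 'a \<Rightarrow> 'a" where "star \<equiv> ald_star G d s"
abbreviation circ :: "'a \<Rightarrow> 'a \<Rightarrow> 'a" where "circ \<equiv> ald_circ G d a"

definition ald_conditions :: "'a set \<Rightarrow> bool" where
  "ald_conditions H \<longleftrightarrow>
     (\<forall>h\<in>H. s \<otimes> d (d h) = d (d h) \<otimes> s \<and> a \<otimes> d h = d (d h) \<otimes> a) \<and>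
     d s \<otimes> s \<otimes> d s = s \<otimes> d s \<otimes> s \<and>
     s \<otimes> d s \<otimes> a = d a \<otimes> s \<and>
     d s \<otimes> s \<otimes> d a = a \<otimes> s"

lemma ald_system_imp_ald_conditions:
  assumes H: "subgroup H G" "s \<in> H" "a \<in> H" and ald: "ald_system H star circ"
  shows "ald_conditions H"
proof -
  have [simp]: "x \<in> H \<Longrightarrow> x \<in> carrier G" for x
    using H(1) by (rule subgroup.mem_carrier)
  have one: "\<one> \<in> H"
    using H(1) by (rule subgroup.one_closed)
  have self_distrib: "star x (star y z) = star (star x y) (star x z)"
    and star_circ: "star x (star y z) = star (circ x y) z"
    and star_distrib_circ: "star x (circ y z) = circ (star x y) (star x z)"
    if "x \<in> H" "y \<in> H" "z \<in> H" for x y z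
    using ald that unfolding ald_system_def by blast+
  have "d s \<otimes> s = s \<otimes> (d s \<otimes> (s \<otimes> inv (d s)))"
    using self_distrib[OF one one one] by (simp add: ald_star_def m_assoc inv_mult_group)
  from arg_cong[OF this, of "\<lambda>v. v \<otimes> d s"]
  have braid: "d s \<otimes> (s \<otimes> d s) = s \<otimes> (d s \<otimes> s)"
    by (simp add: m_assoc)
  have s_comm: "s \<otimes> d (d x) = d (d x) \<otimes> s" if x: "x \<in> H" for x
  proof -
    have "d s \<otimes> (s \<otimes> inv (d x)) = s \<otimes> (d s \<otimes> (inv (d (d x)) \<otimes> (s \<otimes> (d (d x) \<otimes> (inv (d s) \<otimes> inv (d x))))))"
      using self_distrib[OF x one one] x by (simp add: ald_star_def m_assoc inv_mult_group)
    from arg_cong[OF this, of "\<lambda>v. v \<otimes> d x \<otimes> d s"]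
    have "d s \<otimes> (s \<otimes> d s) = s \<otimes> (d s \<otimes> (inv (d (d x)) \<otimes> (s \<otimes> d (d x))))"
      using x by (simp add: m_assoc)
    then have "s = inv (d (d x)) \<otimes> (s \<otimes> d (d x))"
      using x by (simp add: braid)
    from arg_cong[OF this, of "\<lambda>v. d (d x) \<otimes> v"] show ?thesis
      using x by (simp add: m_assoc)
  qed
  have "d s \<otimes> s = a \<otimes> (s \<otimes> inv (d a))"
    using star_circ[OF one one one] by (simp add: ald_star_def ald_circ_def m_assoc inv_mult_group)
  from arg_cong[OF this, of "\<lambda>v. v \<otimes> d a"]
  have a_rel: "d s \<otimes> (s \<otimes> d a) = a \<otimes> s"
    by (simp add: m_assoc)
  have a_twist: "a \<otimes> d z = d (d z) \<otimes> a" if z: "z \<in> H" for z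
  proof -
    have "d (d z) \<otimes> (d s \<otimes> s) = a \<otimes> (d z \<otimes> (s \<otimes> inv (d a)))"
      using star_circ[OF one one z] z by (simp add: ald_star_def ald_circ_def m_assoc inv_mult_group)
    from arg_cong[OF this, of "\<lambda>v. v \<otimes> d a"]
    have "d (d z) \<otimes> (a \<otimes> s) = a \<otimes> (d z \<otimes> s)"
      using z by (simp add: m_assoc a_rel)
    from arg_cong[OF this, of "\<lambda>v. v \<otimes> inv s"] show ?thesis
      using z by (simp add: m_assoc)
  qed
  have "s \<otimes> (d s \<otimes> a) = d a \<otimes> s"
    using star_distrib_circ[OF one one one] by (simp add: ald_star_def ald_circ_def m_assoc inv_mult_group)
  with braid a_rel s_comm a_twist show ?thesis
    unfolding ald_conditions_def by (simp add: m_assoc)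
qed

lemma ald_conditions_twisted_rules:
  assumes H: "subgroup H G" and conds: "ald_conditions H"
    and h: "h \<in> H" and r: "r \<in> carrier G"
  shows "s \<otimes> (d (d h) \<otimes> r) = d (d h) \<otimes> (s \<otimes> r)"
    and "s \<otimes> (inv (d (d h)) \<otimes> r) = inv (d (d h)) \<otimes> (s \<otimes> r)"
    and "a \<otimes> (d h \<otimes> r) = d (d h) \<otimes> (a \<otimes> r)"
    and "inv (d (d h)) \<otimes> (a \<otimes> r) = a \<otimes> (inv (d h) \<otimes> r)"
proof -
  have inv_h: "inv h \<in> H"
    using H h by (rule subgroup.m_inv_closed)
  have carrier: "h \<in> carrier G" "inv h \<in> carrier G"
    using H h inv_h by (simp_all add: subgroup.mem_carrier)
  have "s \<otimes> d (d h) = d (d h) \<otimes> s" "s \<otimes> d (d (inv h)) = d (d (inv h)) \<otimes> s"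
    "a \<otimes> d h = d (d h) \<otimes> a" "a \<otimes> d (inv h) = d (d (inv h)) \<otimes> a"
    using conds h inv_h unfolding ald_conditions_def by blast+
  from this[THEN arg_cong, of "\<lambda>v. v \<otimes> r"] carrier r
  show "s \<otimes> (d (d h) \<otimes> r) = d (d h) \<otimes> (s \<otimes> r)"
    and "s \<otimes> (inv (d (d h)) \<otimes> r) = inv (d (d h)) \<otimes> (s \<otimes> r)"
    and "a \<otimes> (d h \<otimes> r) = d (d h) \<otimes> (a \<otimes> r)"
    and "inv (d (d h)) \<otimes> (a \<otimes> r) = a \<otimes> (inv (d h) \<otimes> r)"
    by (simp_all add: m_assoc)
qed

lemma ald_conditions_imp_ald_system:
  assumes H: "subgroup H G" "s \<in> H" "a \<in> H" "d ` H \<subseteq> H" and conds: "ald_conditions H"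
  shows "ald_system H star circ"
proof -
  have [simp]: "x \<in> H \<Longrightarrow> x \<in> carrier G" for x
    using H(1) by (rule subgroup.mem_carrier)
  have [simp]: "x \<in> H \<Longrightarrow> d x \<in> H" for x
    using H(4) by blast
  note twisted = ald_conditions_twisted_rules[OF H(1) conds]
  have braid: "d s \<otimes> s \<otimes> d s = s \<otimes> d s \<otimes> s"
    and rel_a: "s \<otimes> d s \<otimes> a = d a \<otimes> s"
    and rel_da: "d s \<otimes> s \<otimes> d a = a \<otimes> s"
    using conds unfolding ald_conditions_def by blast+
  have braid_rule: "s \<otimes> (d s \<otimes> (s \<otimes> (inv (d s) \<otimes> r))) = d s \<otimes> (s \<otimes> r)"
    and rel_a_rule: "s \<otimes> (d s \<otimes> (a \<otimes> r)) = d a \<otimes> (s \<otimes> r)"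
    and rel_da_rule: "a \<otimes> (s \<otimes> (inv (d a) \<otimes> r)) = d s \<otimes> (s \<otimes> r)"
    if "r \<in> carrier G" for r
    using arg_cong[OF braid, of "\<lambda>v. v \<otimes> inv (d s) \<otimes> r"] arg_cong[OF rel_a, of "\<lambda>v. v \<otimes> r"]
      arg_cong[OF rel_da, of "\<lambda>v. v \<otimes> inv (d a) \<otimes> r"] that
    by (simp_all add: m_assoc)
  have rel_a': "s \<otimes> (d s \<otimes> a) = d a \<otimes> s"
    using rel_a by (simp add: m_assoc)
  have a_inv_rule: "inv (d (d h)) \<otimes> a = a \<otimes> inv (d h)" if "h \<in> H" for h
    using twisted(4)[OF that, of \<one>] that by simp
  (* These rules move s and a to the right, so simp brings both sides of each identity to one normal form. *)
  show ?thesis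
    unfolding ald_system_def
  proof (intro conjI ballI)
    fix x y assume "x \<in> H" "y \<in> H"
    then show "star x y \<in> H" "circ x y \<in> H"
      using H unfolding ald_star_def ald_circ_def
      by (auto intro!: subgroup.m_closed[OF H(1)] subgroup.m_inv_closed[OF H(1)])
  next
    fix x y z assume "x \<in> H" "y \<in> H" "z \<in> H"
    then show "star x (star y z) = star (star x y) (star x z)"
      unfolding ald_star_def
      by (simp add: m_assoc inv_mult_group twisted(1,2) braid_rule)
    show "star x (star y z) = star (circ x y) z"
      using \<open>x \<in> H\<close> \<open>y \<in> H\<close> \<open>z \<in> H\<close> unfolding ald_star_def ald_circ_def
      by (simp add: m_assoc inv_mult_group twisted(1-3) rel_da_rule)
    show "star x (circ y z) = circ (star x y) (star x z)"
      using \<open>x \<in> H\<close> \<open>y \<in> H\<close> \<open>z \<in> H\<close> unfolding ald_star_def ald_circ_def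
      by (simp add: m_assoc inv_mult_group twisted(1,2,4) a_inv_rule rel_a' rel_a_rule)
  qed
qed

lemma ald_system_iff_ald_conditions:
  assumes "subgroup H G" "s \<in> H" "a \<in> H" "d ` H \<subseteq> H"
  shows "ald_system H star circ \<longleftrightarrow> ald_conditions H"
  using ald_system_imp_ald_conditions[OF assms(1-3)] ald_conditions_imp_ald_system[OF assms]
  by blast

lemma ald_conditions_generate_iff:
  assumes S: "S \<subseteq> carrier G"
  shows "ald_conditions (generate G S) \<longleftrightarrow> ald_conditions S"
proof
  assume "ald_conditions (generate G S)"
  then show "ald_conditions S"
    using generate.incl[of _ S G] unfolding ald_conditions_def by blast
next
  assume conds: "ald_conditions S"
  have "s \<otimes> (d \<circ> d) h = (d \<circ> d) h \<otimes> s" if "h \<in> generate G S" for h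
    using twisted_commute_generate[OF dd_group_hom dd_group_hom s_closed S _ that] conds
    unfolding ald_conditions_def by simp
  moreover have "a \<otimes> d h = (d \<circ> d) h \<otimes> a" if "h \<in> generate G S" for h
    using twisted_commute_generate[OF d_group_hom dd_group_hom a_closed S _ that] conds
    unfolding ald_conditions_def by simp
  ultimately show "ald_conditions (generate G S)"
    using conds unfolding ald_conditions_def by simp
qed

definition ald_generators :: "'a set" where
  "ald_generators = range (\<lambda>k. (d ^^ k) s) \<union> range (\<lambda>k. (d ^^ k) a)"

lemma ald_generators_subset_carrier: "ald_generators \<subseteq> carrier G"
  unfolding ald_generators_def by auto

lemma s_a_in_generate_ald_generators: "s \<in> generate G ald_generators" "a \<in> generate G ald_generators"
proof -
  have "s \<in> ald_generators" "a \<in> ald_generators"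
    unfolding ald_generators_def by (metis UnI1 UnI2 funpow_0 rangeI)+
  then show "s \<in> generate G ald_generators" "a \<in> generate G ald_generators"
    by (auto intro: generate.incl)
qed

lemma d_image_generate_ald_generators: "d ` generate G ald_generators \<subseteq> generate G ald_generators"
proof -
  have "d ((d ^^ k) x) \<in> range (\<lambda>k. (d ^^ k) x)" for k x
    using rangeI[of "\<lambda>k. (d ^^ k) x" "Suc k"] by simp
  then have "d ` ald_generators \<subseteq> ald_generators"
    unfolding ald_generators_def by blast
  then show ?thesis
    by (rule hom_image_generate_subset[OF d_hom ald_generators_subset_carrier])
qed

lemma ald_conditions_generators_shift:
  assumes conds: "ald_conditions ald_generators" and x: "x \<in> {s, a}"
  shows "(d ^^ n) s \<otimes> d (d ((d ^^ (n + k)) x)) = d (d ((d ^^ (n + k)) x)) \<otimes> (d ^^ n) s"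
    and "(d ^^ n) a \<otimes> d ((d ^^ (n + k)) x) = d (d ((d ^^ (n + k)) x)) \<otimes> (d ^^ n) a"
proof -
  have "(d ^^ k) x \<in> ald_generators" "x \<in> carrier G"
    using x unfolding ald_generators_def by auto
  then have "s \<otimes> d (d ((d ^^ k) x)) = d (d ((d ^^ k) x)) \<otimes> s"
    and "a \<otimes> d ((d ^^ k) x) = d (d ((d ^^ k) x)) \<otimes> a"
    using conds unfolding ald_conditions_def by blast+
  from this[THEN arg_cong, of "d ^^ n"] \<open>x \<in> carrier G\<close>
  show "(d ^^ n) s \<otimes> d (d ((d ^^ (n + k)) x)) = d (d ((d ^^ (n + k)) x)) \<otimes> (d ^^ n) s"
    and "(d ^^ n) a \<otimes> d ((d ^^ (n + k)) x) = d (d ((d ^^ (n + k)) x)) \<otimes> (d ^^ n) a"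
    by (simp_all add: funpow_swap1[symmetric] funpow_funpow_apply)
qed

lemma ald_conditions_level_one_shift:
  assumes "ald_conditions H"
  shows "d ((d ^^ n) s) \<otimes> (d ^^ n) s \<otimes> d ((d ^^ n) s) = (d ^^ n) s \<otimes> d ((d ^^ n) s) \<otimes> (d ^^ n) s"
    and "(d ^^ n) s \<otimes> d ((d ^^ n) s) \<otimes> (d ^^ n) a = d ((d ^^ n) a) \<otimes> (d ^^ n) s"
    and "d ((d ^^ n) s) \<otimes> (d ^^ n) s \<otimes> d ((d ^^ n) a) = (d ^^ n) a \<otimes> (d ^^ n) s"
proof -
  have "d s \<otimes> s \<otimes> d s = s \<otimes> d s \<otimes> s" "s \<otimes> d s \<otimes> a = d a \<otimes> s" "d s \<otimes> s \<otimes> d a = a \<otimes> s"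
    using assms unfolding ald_conditions_def by blast+
  from this[THEN arg_cong, of "d ^^ n"]
  show "d ((d ^^ n) s) \<otimes> (d ^^ n) s \<otimes> d ((d ^^ n) s) = (d ^^ n) s \<otimes> d ((d ^^ n) s) \<otimes> (d ^^ n) s"
    and "(d ^^ n) s \<otimes> d ((d ^^ n) s) \<otimes> (d ^^ n) a = d ((d ^^ n) a) \<otimes> (d ^^ n) s"
    and "d ((d ^^ n) s) \<otimes> (d ^^ n) s \<otimes> d ((d ^^ n) a) = (d ^^ n) a \<otimes> (d ^^ n) s"
    by (simp_all add: funpow_swap1[symmetric])
qed

lemma ald_conditions_generators_imp_B_relations:
  assumes conds: "ald_conditions ald_generators"
  shows "B_relations G (\<lambda>i. (d ^^ (i - 1)) s) (\<lambda>i. (d ^^ (i - 1)) a)"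
    (is "B_relations G ?sig ?al")
  unfolding B_relations_def
proof (intro allI impI conjI)
  fix i j :: nat
  assume "1 \<le> i" "1 \<le> j"
  then obtain n p where i: "i = Suc n" and j: "j = Suc p"
    by (cases i; cases j) auto
  note shift = ald_conditions_generators_shift[OF conds]
  {
    assume "i + 2 \<le> j"
    then obtain k where "p = Suc (Suc (n + k))"
      using le_Suc_ex[of "Suc (Suc n)" p] i j by auto
    then show "?sig j \<otimes> ?sig i = ?sig i \<otimes> ?sig j" "?al j \<otimes> ?sig i = ?sig i \<otimes> ?al j"
      using shift(1)[of s n k] shift(1)[of a n k] i j by simp_all
  }
  {
    assume "j + 1 \<le> i"
    then obtain k where "n = Suc (p + k)"
      using le_Suc_ex[of "Suc p" n] i j by auto
    then show "?al j \<otimes> ?sig i = ?sig (i + 1) \<otimes> ?al j" "?al j \<otimes> ?al i = ?al (i + 1) \<otimes> ?al j"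
      using shift(2)[of s p k] shift(2)[of a p k] i j by simp_all
  }
  {
    assume "j = i + 1"
    then show "?sig j \<otimes> ?sig i \<otimes> ?sig j = ?sig i \<otimes> ?sig j \<otimes> ?sig i"
      "?sig i \<otimes> ?sig j \<otimes> ?al i = ?al j \<otimes> ?sig i"
      "?sig j \<otimes> ?sig i \<otimes> ?al j = ?al i \<otimes> ?sig i"
      using ald_conditions_level_one_shift[OF conds, of n] i by simp_all
  }
qed

lemma B_relations_imp_ald_conditions_generators:
  assumes "B_relations G (\<lambda>i. (d ^^ (i - 1)) s) (\<lambda>i. (d ^^ (i - 1)) a)"
  shows "ald_conditions ald_generators"
proof -
  note rel = assms[unfolded B_relations_def, rule_format]
  have "s \<otimes> d (d h) = d (d h) \<otimes> s \<and> a \<otimes> d h = d (d h) \<otimes> a" if "h \<in> ald_generators" for h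
  proof -
    from that obtain k where "h = (d ^^ k) s \<or> h = (d ^^ k) a"
      unfolding ald_generators_def by blast
    moreover have
      "s \<otimes> d (d ((d ^^ k) x)) = d (d ((d ^^ k) x)) \<otimes> s \<and> a \<otimes> d ((d ^^ k) x) = d (d ((d ^^ k) x)) \<otimes> a"
      if "x \<in> {s, a}" for x
      using rel[of "Suc 0" "Suc (Suc (Suc k))"] rel[of "Suc (Suc k)" "Suc 0"] that by auto
    ultimately show ?thesis
      by blast
  qed
  moreover have "d s \<otimes> s \<otimes> d s = s \<otimes> d s \<otimes> s" "s \<otimes> d s \<otimes> a = d a \<otimes> s" "d s \<otimes> s \<otimes> d a = a \<otimes> s"
    using rel[of "Suc 0" "Suc (Suc 0)"] by simp_all
  ultimately show ?thesis
    unfolding ald_conditions_def by blast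
qed

end

theorem proposition2p12:
  fixes G (structure) and d :: "'a \<Rightarrow> 'a" and a s :: 'a
  assumes "group G"
    and "d \<in> hom G G"
    and "a \<in> carrier G" and "s \<in> carrier G"
  defines "sig \<equiv> (\<lambda>i::nat. (d ^^ (i - 1)) s)"
    and "al \<equiv> (\<lambda>i::nat. (d ^^ (i - 1)) a)"
  defines "H \<equiv> generate G (sig ` {1..} \<union> al ` {1..})"
  shows "ald_system H (ald_star G d s) (ald_circ G d a) \<longleftrightarrow> B_relations G sig al"
proof -
  interpret ald_endomorphism G d a s
    using assms(1-4) by (simp add: ald_endomorphism_def ald_endomorphism_axioms_def)
  have H: "H = generate G ald_generators"
    unfolding H_def sig_def al_def ald_generators_def
    using image_diff_one_atLeast_one[of "\<lambda>k. (d ^^ k) s"] image_diff_one_atLeast_one[of "\<lambda>k. (d ^^ k) a"]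
    by simp
  have "ald_system H star circ \<longleftrightarrow> ald_conditions H"
    unfolding H using generate_is_subgroup[OF ald_generators_subset_carrier]
      s_a_in_generate_ald_generators d_image_generate_ald_generators
    by (rule ald_system_iff_ald_conditions)
  also have "\<dots> \<longleftrightarrow> ald_conditions ald_generators"
    unfolding H using ald_generators_subset_carrier by (rule ald_conditions_generate_iff)
  also have "\<dots> \<longleftrightarrow> B_relations G sig al"
    unfolding sig_def al_def
    using ald_conditions_generators_imp_B_relations B_relations_imp_ald_conditions_generators by blast
  finally show ?thesis .
qed

end
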